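(* Let $A$ be a rational $m\times n$ matrix of full row rank with $m\geq 2$, and let $r=A_i$ be a row of $A$ all of whose entries lie in $\{0,1,-1\}$. Then $A$ is equimodular if and only if the trim $A/\!\!/(i,j)$ is equimodular for every $j\in\operatorname{supp}(r)$.
   Context: An $m\times n$ matrix is equimodular if it has full row rank $m$ and all its nonzero $m\times m$ minors have the same absolute value. $\operatorname{supp}(x)$ is the set of indices of nonzero coordinates of $x$. For a position $p=(i,j)$ with $A_i^j\neq0$, the pivot $A/p$ is obtained from $A$ by dividing row $i$ by $A_i^j$ and adding suitable multiples of this new row to the other rows so that column $j$ becomes the $i$-th unit vector; the trim $A/\!\!/p$ is obtained from $A/p$ by deleting row $i$ and column $j$. *)

theory Defs
  imports "Jordan_Normal_Form.DL_Rank" "Jordan_Normal_Form.DL_Submatrix" "Jordan_Normal_Form.Determinant"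
begin

definition full_row_rank :: "rat mat \<Rightarrow> bool" where
  "full_row_rank A \<longleftrightarrow> vec_space.rank (dim_row A) A = dim_row A"

definition minor_cols :: "rat mat \<Rightarrow> nat set \<Rightarrow> rat" where
  "minor_cols A J = det (submatrix A {..<dim_row A} J)"

definition equimodular :: "rat mat \<Rightarrow> bool" where
  "equimodular A \<longleftrightarrow> full_row_rank A \<and>
     (\<forall>J J'. J \<subseteq> {..<dim_col A} \<and> card J = dim_row A \<and>
             J' \<subseteq> {..<dim_col A} \<and> card J' = dim_row A \<and>
             minor_cols A J \<noteq> 0 \<and> minor_cols A J' \<noteq> 0
             \<longrightarrow> \<bar>minor_cols A J\<bar> = \<bar>minor_cols A J'\<bar>)"

definition pivot :: "rat mat \<Rightarrow> nat \<Rightarrow> nat \<Rightarrow> rat mat" where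
  "pivot A i j = mat (dim_row A) (dim_col A)
     (\<lambda>(k,l). if k = i then A $$ (i,l) / A $$ (i,j)
              else A $$ (k,l) - A $$ (k,j) * (A $$ (i,l) / A $$ (i,j)))"

definition trim :: "rat mat \<Rightarrow> nat \<Rightarrow> nat \<Rightarrow> rat mat" where
  "trim A i j = submatrix (pivot A i j) ({..<dim_row A} - {i}) ({..<dim_col A} - {j})"

end

theory Submission
  imports Defs "Jordan_Normal_Form.DL_Rank_Submatrix"
begin

(*
  Pivoting on a position (i, j) with |A(i,j)| = 1 multiplies every m x m minor by +-1 and turns
  column j into the i-th unit vector. Expanding along that column, the minors of A through column j
  are, up to sign, exactly the minors of the trim A//(i,j). Hence the trims of an equimodular matrix
  are equimodular, and conversely, if the trims at the support of r are equimodular, any two nonzero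
  minors of A sharing a support column have equal absolute value.

  Every nonzero minor meets supp(r), by Laplace expansion along row i. Let J, J' be nonzero minors
  with j in J and j' in J' support columns, j not in J'. Expanding det A_J' along the pivoted row
  expresses it through the minors on J' - {c} + {j}: either some term with c <> j' survives,
  giving a nonzero minor through both j and j', or only the term for c = j' does, and that minor
  through j has the same absolute value as J'. In both cases J and J' are linked by trims at
  support columns.
*)

section \<open>Enumerating index sets\<close>

lemma pick_lessThan: "a < m \<Longrightarrow> pick {..<m} a = a"
  using pick_reduce_set[of a m UNIV] by (simp add: pick_UNIV lessThan_def)

lemma strict_mono_on_pick: "strict_mono_on {..<card S} (pick S)"
  by (intro strict_mono_onI pick_mono) auto

lemma bij_betw_pick:
  assumes "finite S"
  shows "bij_betw (pick S) {..<card S} S"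
proof -
  have inj: "inj_on (pick S) {..<card S}"
    by (rule strict_mono_on_imp_inj_on[OF strict_mono_on_pick])
  moreover have "pick S ` {..<card S} \<subseteq> S"
    using pick_in_set by blast
  moreover have "card (pick S ` {..<card S}) = card S"
    using card_image[OF inj] by simp
  ultimately show ?thesis
    using card_subset_eq[OF assms] by (simp add: bij_betw_def)
qed

lemma pick_image:
  fixes f :: "nat \<Rightarrow> nat"
  assumes f: "strict_mono_on K f" and b: "b < card K"
  shows "pick (f ` K) b = f (pick K b)"
proof -
  let ?y = "pick K b"
  have y: "?y \<in> K" and card_below: "card {k \<in> K. k < ?y} = b"
    using pick_in_set card_pick b by auto
  have "{x \<in> f ` K. x < f ?y} = f ` {k \<in> K. k < ?y}"
    using strict_mono_on_less[OF f _ y] by auto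
  moreover have "inj_on f {k \<in> K. k < ?y}"
    using strict_mono_on_imp_inj_on[OF f] by (rule inj_on_subset) auto
  ultimately have "card {x \<in> f ` K. x < f ?y} = b"
    using card_below card_image by metis
  then show ?thesis
    using pick_card_in_set[of "f ?y" "f ` K"] y by simp
qed

lemma pick_lessThan_Diff_singleton:
  assumes i: "i < m" and a: "a < m - 1"
  shows "pick ({..<m} - {i}) a = insert_index i a"
proof -
  have "m = Suc (m - 1)"
    using i by simp
  then have "{..<m} - {i} = insert_index i ` {..<m - 1}"
    using insert_index_image[of i "m - 1"] i by (metis atLeast0LessThan)
  moreover have "strict_mono_on {..<m - 1} (insert_index i)"
    by (rule strict_mono_onI) (simp add: insert_index_def)
  ultimately have "pick ({..<m} - {i}) a = insert_index i (pick {..<m - 1} a)"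
    using pick_image[of "{..<m - 1}" "insert_index i" a] a by simp
  then show ?thesis
    using pick_lessThan[OF a] by simp
qed

lemma
  assumes "I \<subseteq> {..<dim_row A}" "J \<subseteq> {..<dim_col A}"
  shows submatrix_carrier_subset: "submatrix A I J \<in> carrier_mat (card I) (card J)"
    and index_submatrix_subset:
      "a < card I \<Longrightarrow> b < card J \<Longrightarrow> submatrix A I J $$ (a, b) = A $$ (pick I a, pick J b)"
proof -
  have rows: "{i. i < dim_row A \<and> i \<in> I} = I" and cols: "{j. j < dim_col A \<and> j \<in> J} = J"
    using assms by blast+
  show "submatrix A I J \<in> carrier_mat (card I) (card J)"
    by (rule carrier_matI) (simp_all only: dim_submatrix rows cols)
  show "a < card I \<Longrightarrow> b < card J \<Longrightarrow> submatrix A I J $$ (a, b) = A $$ (pick I a, pick J b)"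
    by (rule submatrix_index[of a A I b J, unfolded rows cols])
qed

lemma submatrix_submatrix:
  assumes I: "I \<subseteq> {..<dim_row A}" and J: "J \<subseteq> {..<dim_col A}"
    and I': "I' \<subseteq> {..<card I}" and J': "J' \<subseteq> {..<card J}"
  shows "submatrix (submatrix A I J) I' J' = submatrix A (pick I ` I') (pick J ` J')"
proof -
  have fin: "finite I" "finite J"
    using I J finite_subset by auto
  have mono: "strict_mono_on I' (pick I)" "strict_mono_on J' (pick J)"
    using monotone_on_subset[OF strict_mono_on_pick] I' J' by auto
  have "pick I ` I' \<subseteq> I" "pick J ` J' \<subseteq> J"
    using bij_betw_imp_surj_on[OF bij_betw_pick] fin I' J' by blast+
  then have range: "pick I ` I' \<subseteq> {..<dim_row A}" "pick J ` J' \<subseteq> {..<dim_col A}"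
    using I J by auto
  have card: "card (pick I ` I') = card I'" "card (pick J ` J') = card J'"
    using card_image strict_mono_on_imp_inj_on mono by auto
  have B: "submatrix A I J \<in> carrier_mat (card I) (card J)"
    by (rule submatrix_carrier_subset[OF I J])
  then have I'': "I' \<subseteq> {..<dim_row (submatrix A I J)}"
    and J'': "J' \<subseteq> {..<dim_col (submatrix A I J)}"
    using I' J' by auto
  have dims: "dim_row (submatrix (submatrix A I J) I' J') = card I'"
    "dim_col (submatrix (submatrix A I J) I' J') = card J'"
    "dim_row (submatrix A (pick I ` I') (pick J ` J')) = card I'"
    "dim_col (submatrix A (pick I ` I') (pick J ` J')) = card J'"
    using submatrix_carrier_subset[OF I'' J''] submatrix_carrier_subset[OF range] unfolding card
    by (simp_all only: carrier_matD)
  show ?thesis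
  proof (rule eq_matI)
    fix a b
    assume "a < dim_row (submatrix A (pick I ` I') (pick J ` J'))"
      and "b < dim_col (submatrix A (pick I ` I') (pick J ` J'))"
    then have a: "a < card I'" and b: "b < card J'"
      by (simp_all only: dims)
    have "pick I' a < card I" "pick J' b < card J"
      using pick_in_set a b I' J' by auto
    then have "submatrix (submatrix A I J) I' J' $$ (a, b)
        = A $$ (pick I (pick I' a), pick J (pick J' b))"
      using index_submatrix_subset[OF I'' J'' a b] index_submatrix_subset[OF I J] by simp
    also have "\<dots> = submatrix A (pick I ` I') (pick J ` J') $$ (a, b)"
      using index_submatrix_subset[OF range] card a b
      by (simp add: pick_image[OF mono(1) a] pick_image[OF mono(2) b])
    finally show "submatrix (submatrix A I J) I' J' $$ (a, b)
        = submatrix A (pick I ` I') (pick J ` J') $$ (a, b)" .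
  qed (simp_all only: dims)
qed

lemma mat_delete_eq_submatrix:
  assumes A: "A \<in> carrier_mat m n" and i: "i < m" and j: "j < n"
  shows "mat_delete A i j = submatrix A ({..<m} - {i}) ({..<n} - {j})"
proof -
  have sub: "{..<m} - {i} \<subseteq> {..<dim_row A}" "{..<n} - {j} \<subseteq> {..<dim_col A}"
    using A by auto
  have card: "card ({..<m} - {i}) = m - 1" "card ({..<n} - {j}) = n - 1"
    using i j by simp_all
  have S: "submatrix A ({..<m} - {i}) ({..<n} - {j}) \<in> carrier_mat (m - 1) (n - 1)"
    using submatrix_carrier_subset[OF sub] unfolding card .
  show ?thesis
  proof (rule eq_matI)
    fix a b
    assume "a < dim_row (submatrix A ({..<m} - {i}) ({..<n} - {j}))"
      and "b < dim_col (submatrix A ({..<m} - {i}) ({..<n} - {j}))"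
    then have a: "a < m - 1" and b: "b < n - 1"
      using S by auto
    have "mat_delete A i j $$ (a, b) = A $$ (insert_index i a, insert_index j b)"
      using A a b unfolding mat_delete_def insert_index_def by auto
    also have "\<dots> = submatrix A ({..<m} - {i}) ({..<n} - {j}) $$ (a, b)"
      using index_submatrix_subset[OF sub] a b card
      by (simp add: pick_lessThan_Diff_singleton[OF i a] pick_lessThan_Diff_singleton[OF j b])
    finally show "mat_delete A i j $$ (a, b)
        = submatrix A ({..<m} - {i}) ({..<n} - {j}) $$ (a, b)" .
  qed (use A S in auto)
qed

lemma image_subsets_card_bij_betw:
  assumes "bij_betw f A B"
  shows "image f ` {K. K \<subseteq> A \<and> card K = k} = {S. S \<subseteq> B \<and> card S = k}"
proof (intro equalityI subsetI)
  fix S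
  assume "S \<in> image f ` {K. K \<subseteq> A \<and> card K = k}"
  then obtain K where "K \<subseteq> A" "card K = k" "S = f ` K"
    by blast
  then show "S \<in> {S. S \<subseteq> B \<and> card S = k}"
    using assms card_image inj_on_subset by (fastforce simp: bij_betw_def)
next
  fix S
  assume "S \<in> {S. S \<subseteq> B \<and> card S = k}"
  then have "S \<subseteq> f ` A" "card S = k"
    using assms by (auto simp: bij_betw_def)
  then obtain K where "K \<subseteq> A" "S = f ` K"
    by (auto simp: subset_image_iff)
  moreover have "card K = k"
    using calculation \<open>card S = k\<close> assms card_image inj_on_subset by (metis bij_betw_def)
  ultimately show "S \<in> image f ` {K. K \<subseteq> A \<and> card K = k}"
    by blast
qed

lemma remove_subsets_card_containing:
  assumes "finite C" "j \<notin> C"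
  shows "(\<lambda>J. J - {j}) ` {J. J \<subseteq> insert j C \<and> card J = Suc k \<and> j \<in> J} = {S. S \<subseteq> C \<and> card S = k}"
proof (intro equalityI subsetI)
  fix S
  assume "S \<in> (\<lambda>J. J - {j}) ` {J. J \<subseteq> insert j C \<and> card J = Suc k \<and> j \<in> J}"
  then show "S \<in> {S. S \<subseteq> C \<and> card S = k}"
    using assms finite_subset by fastforce
next
  fix S
  assume S: "S \<in> {S. S \<subseteq> C \<and> card S = k}"
  then have "insert j S \<in> {J. J \<subseteq> insert j C \<and> card J = Suc k \<and> j \<in> J}"
    using assms finite_subset by (fastforce simp: card_insert_if)
  moreover have "S = insert j S - {j}"
    using S assms by auto
  ultimately show "S \<in> (\<lambda>J. J - {j}) ` {J. J \<subseteq> insert j C \<and> card J = Suc k \<and> j \<in> J}"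
    by blast
qed

lemma exchange_subset_card:
  fixes n :: nat
  assumes J: "J \<subseteq> {..<n}" "card J = m" and c: "c \<in> J" and j: "j < n" "j \<notin> J"
  shows "insert j (J - {c}) \<subseteq> {..<n}" "card (insert j (J - {c})) = m"
proof -
  have "finite J"
    using J(1) by (rule finite_subset) simp
  then have "card (J - {c}) = m - 1" "m > 0"
    using J(2) c card_gt_0_iff by auto
  then show "insert j (J - {c}) \<subseteq> {..<n}" "card (insert j (J - {c})) = m"
    using J(1) c j \<open>finite J\<close> by auto
qed

section \<open>Column minors\<close>

lemma minus_one_power_cancel:
  "(-1::'a::comm_ring_1)^(p + q) * (-1)^(i + q) = (-1)^(i + p)"
proof -
  have "(-1::'a)^(p + q) * (-1)^(i + q) = (-1)^(i + p) * ((-1)^2)^q"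
    by (simp add: power_add power_mult[symmetric] mult_2_right algebra_simps)
  then show ?thesis
    by simp
qed

lemma laplace_expansion_row_submatrix:
  assumes X: "X \<in> carrier_mat m n" and i: "i < m" and J: "J \<subseteq> {..<n}" "card J = m"
  shows "det (submatrix X {..<m} J) = (\<Sum>c\<in>J. (-1)^(i + card {x\<in>J. x < c}) * X $$ (i, c)
           * det (submatrix X ({..<m} - {i}) (J - {c})))"
    (is "_ = (\<Sum>c\<in>J. ?g c)")
proof -
  let ?B = "submatrix X {..<m} J"
  have sub: "{..<m} \<subseteq> {..<dim_row X}" "J \<subseteq> {..<dim_col X}"
    using X J by auto
  have B: "?B \<in> carrier_mat m m"
    using submatrix_carrier_subset[OF sub] J by simp
  have bij: "bij_betw (pick J) {..<m} J"
    using bij_betw_pick[of J] J finite_subset by fastforce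
  have "det ?B = (\<Sum>t<m. ?B $$ (i, t) * cofactor ?B i t)"
    by (rule laplace_expansion_row[OF B i])
  also have "\<dots> = (\<Sum>t<m. ?g (pick J t))"
  proof (rule sum.cong[OF refl])
    fix t
    assume t: "t \<in> {..<m}"
    have "pick {..<m} ` ({..<m} - {i}) = id ` ({..<m} - {i})"
      using pick_lessThan by (intro image_cong) auto
    moreover have "pick J ` ({..<m} - {t}) = pick J ` {..<m} - pick J ` {t}"
      using bij t by (intro inj_on_image_set_diff) (auto simp: bij_betw_def)
    then have "pick J ` ({..<m} - {t}) = J - {pick J t}"
      using bij by (simp add: bij_betw_def)
    ultimately have "mat_delete ?B i t = submatrix X ({..<m} - {i}) (J - {pick J t})"
      using mat_delete_eq_submatrix[OF B i]
        submatrix_submatrix[OF sub, of "{..<m} - {i}" "{..<m} - {t}"] t J by auto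
    moreover have "?B $$ (i, t) = X $$ (i, pick J t)"
      using index_submatrix_subset[OF sub] pick_lessThan i t J by auto
    moreover have "card {x\<in>J. x < pick J t} = t"
      using card_pick t J by auto
    ultimately show "?B $$ (i, t) * cofactor ?B i t = ?g (pick J t)"
      by (simp add: cofactor_def)
  qed
  also have "\<dots> = (\<Sum>c\<in>J. ?g c)"
    by (rule sum.reindex_bij_betw[OF bij])
  finally show ?thesis .
qed

lemma det_zero_col:
  assumes B: "B \<in> carrier_mat n n" and t: "t < n" and zero: "\<And>k. k < n \<Longrightarrow> B $$ (k, t) = 0"
  shows "det B = 0"
  using laplace_expansion_column[OF B t] zero by simp

lemma det_submatrix_zero_col:
  assumes X: "X \<in> carrier_mat m n" and i: "i < m"
    and S: "S \<subseteq> {..<n}" "card S = m - 1" and j: "j \<in> S"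
    and zero: "\<And>k. k < m \<Longrightarrow> k \<noteq> i \<Longrightarrow> X $$ (k, j) = 0"
  shows "det (submatrix X ({..<m} - {i}) S) = 0"
proof -
  have sub: "{..<m} - {i} \<subseteq> {..<dim_row X}" "S \<subseteq> {..<dim_col X}"
    using X S by auto
  have card: "card ({..<m} - {i}) = m - 1"
    using i by simp
  define t where "t = card {x\<in>S. x < j}"
  have "finite S"
    using S(1) by (rule finite_subset) simp
  then have "card {x\<in>S. x < j} < card S"
    by (rule psubset_card_mono) (use j in blast)
  then have t: "t < m - 1"
    unfolding t_def using S(2) by simp
  have pick_t: "pick S t = j"
    unfolding t_def by (rule pick_card_in_set[OF j])
  show ?thesis
  proof (rule det_zero_col[OF _ t])
    show "submatrix X ({..<m} - {i}) S \<in> carrier_mat (m - 1) (m - 1)"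
      using submatrix_carrier_subset[OF sub] card S by simp
    fix k
    assume k: "k < m - 1"
    have "insert_index i k < m" "insert_index i k \<noteq> i"
      using k i by (auto simp: insert_index_def)
    then show "submatrix X ({..<m} - {i}) S $$ (k, t) = 0"
      using index_submatrix_subset[OF sub] card S k t zero
      by (simp add: pick_lessThan_Diff_singleton[OF i k] pick_t)
  qed
qed

lemma det_submatrix_unit_col:
  assumes X: "X \<in> carrier_mat m n" and i: "i < m"
    and J: "J \<subseteq> {..<n}" "card J = m" and j: "j \<in> J"
    and one: "X $$ (i, j) = 1" and zero: "\<And>k. k < m \<Longrightarrow> k \<noteq> i \<Longrightarrow> X $$ (k, j) = 0"
  shows "det (submatrix X {..<m} J)
    = (-1)^(i + card {x\<in>J. x < j}) * det (submatrix X ({..<m} - {i}) (J - {j}))"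
proof -
  let ?g = "\<lambda>c. (-1)^(i + card {x\<in>J. x < c}) * X $$ (i, c)
    * det (submatrix X ({..<m} - {i}) (J - {c}))"
  have fin: "finite J"
    using J finite_subset by auto
  have "det (submatrix X ({..<m} - {i}) (J - {c})) = 0" if c: "c \<in> J - {j}" for c
    by (rule det_submatrix_zero_col[OF X i _ _ _ zero]) (use J fin c j in auto)
  then have rest: "(\<Sum>c\<in>J - {j}. ?g c) = 0"
    by simp
  have "det (submatrix X {..<m} J) = (\<Sum>c\<in>J. ?g c)"
    by (rule laplace_expansion_row_submatrix[OF X i J])
  also have "\<dots> = ?g j + (\<Sum>c\<in>J - {j}. ?g c)"
    by (rule sum.remove[OF fin j])
  finally show ?thesis
    unfolding rest one by simp
qed

lemma exchange_expansion_unit_col: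
  assumes X: "X \<in> carrier_mat m n" and i: "i < m" and j: "j < n"
    and one: "X $$ (i, j) = 1" and zero: "\<And>k. k < m \<Longrightarrow> k \<noteq> i \<Longrightarrow> X $$ (k, j) = 0"
    and J: "J \<subseteq> {..<n}" "card J = m" "j \<notin> J"
  shows "det (submatrix X {..<m} J)
    = (\<Sum>c\<in>J. (-1)^(card {x\<in>J. x < c} + card {x \<in> insert j (J - {c}). x < j})
        * X $$ (i, c) * det (submatrix X {..<m} (insert j (J - {c}))))"
proof -
  have fin: "finite J"
    using J finite_subset by auto
  have "(-1)^(i + card {x\<in>J. x < c}) * X $$ (i, c) * det (submatrix X ({..<m} - {i}) (J - {c}))
      = (-1)^(card {x\<in>J. x < c} + card {x \<in> insert j (J - {c}). x < j})
        * X $$ (i, c) * det (submatrix X {..<m} (insert j (J - {c})))"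
    if c: "c \<in> J" for c
  proof -
    let ?K = "insert j (J - {c})"
    have K: "?K \<subseteq> {..<n}" "card ?K = m" "j \<in> ?K" and K_j: "?K - {j} = J - {c}"
      using exchange_subset_card[OF J(1,2) c j J(3)] J(3) by auto
    let ?p = "card {x\<in>J. x < c}" and ?q = "card {x \<in> ?K. x < j}"
    let ?D = "det (submatrix X ({..<m} - {i}) (J - {c}))"
    have "det (submatrix X {..<m} ?K) = (-1)^(i + ?q) * ?D"
      using det_submatrix_unit_col[OF X i K one zero] unfolding K_j .
    then have "(-1)^(?p + ?q) * X $$ (i, c) * det (submatrix X {..<m} ?K)
        = ((-1)^(?p + ?q) * (-1)^(i + ?q)) * X $$ (i, c) * ?D"
      by (simp add: ac_simps)
    also have "\<dots> = (-1)^(i + ?p) * X $$ (i, c) * ?D"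
      by (simp only: minus_one_power_cancel)
    finally show ?thesis
      by (rule sym)
  qed
  then show ?thesis
    using laplace_expansion_row_submatrix[OF X i J(1,2)] by simp
qed

lemma det_row_operation:
  fixes B :: "'a :: field mat"
  assumes B: "B \<in> carrier_mat m m" and i: "i < m" and a: "a \<noteq> 0"
  shows "det (mat m m (\<lambda>(k, l). if k = i then B $$ (i, l) / a
      else B $$ (k, l) - c k * (B $$ (i, l) / a))) = det B / a"
proof -
  define B1 where "B1 = multrow i (1 / a) B"
  have B1: "B1 \<in> carrier_mat m m"
    unfolding B1_def using B by simp
  define M where "M S = mat m m (\<lambda>(k, l). if k \<in> S \<and> k \<noteq> i then B1 $$ (k, l) - c k * B1 $$ (i, l)
    else B1 $$ (k, l))" for S
  have M: "M S \<in> carrier_mat m m" for S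
    unfolding M_def by simp
  have det_M: "det (M S) = det B1" if "finite S" for S
    using that
  proof (induction S rule: finite_induct)
    case empty
    have "M {} = B1"
      unfolding M_def using B1 by (intro eq_matI) auto
    then show ?case by simp
  next
    case (insert x S)
    show ?case
    proof (cases "x = i")
      case True
      then have "M (insert x S) = M S"
        unfolding M_def by (intro eq_matI) auto
      then show ?thesis using insert by simp
    next
      case False
      then have "M (insert x S) = addrow (- c x) x i (M S)"
        unfolding M_def mat_addrow_def using insert(2) i by (intro eq_matI) auto
      then show ?thesis
        using det_addrow[OF i False M] insert by simp
    qed
  qed
  have "M {..<m} = mat m m (\<lambda>(k, l). if k = i then B $$ (i, l) / a
      else B $$ (k, l) - c k * (B $$ (i, l) / a))"
    unfolding M_def B1_def mat_multrow_def using B i by (intro eq_matI) auto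
  moreover have "det B1 = det B / a"
    unfolding B1_def using det_multrow[OF i B] by simp
  ultimately show ?thesis
    using det_M[of "{..<m}"] by simp
qed

section \<open>Rank and nonzero minors\<close>

lemma (in vec_space) maximal_indpt_cols_exists:
  "\<exists>S. maximal S (\<lambda>T. T \<subseteq> set (cols A) \<and> lin_indpt T)"
  using maximal_exists[of "\<lambda>T. T \<subseteq> set (cols A) \<and> lin_indpt T" "card (set (cols A))" "{}"]
  by (meson List.finite_set card_mono empty_iff empty_subsetI finite_lin_indpt2 rev_finite_subset)

lemma (in vec_space) rank_le_dim_row:
  assumes A: "A \<in> carrier_mat n nc"
  shows "rank A \<le> n"
proof -
  obtain S where S: "maximal S (\<lambda>T. T \<subseteq> set (cols A) \<and> lin_indpt T)"
    using maximal_indpt_cols_exists by blast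
  then have "S \<subseteq> set (cols A)" "lin_indpt S"
    unfolding maximal_def by auto
  moreover have "set (cols A) \<subseteq> carrier_vec n"
    using cols_dim[of A] A by simp
  ultimately have "S \<subseteq> carrier_vec n" "lin_indpt S"
    by auto
  then have "card S \<le> dim"
    using li_le_dim(2)[OF fin_dim] by simp
  then show ?thesis
    using rank_card_indpt[OF A S] dim_is_n by simp
qed

lemma (in vec_space) nonzero_minor_if_full_rank:
  assumes A: "A \<in> carrier_mat n nc" and rank: "rank A = n"
  shows "\<exists>J \<subseteq> {..<nc}. card J = n \<and> det (submatrix A {..<n} J) \<noteq> 0"
proof -
  obtain S where S: "maximal S (\<lambda>T. T \<subseteq> set (cols A) \<and> lin_indpt T)"
    using maximal_indpt_cols_exists by blast
  then have "S \<subseteq> set (cols A)" and indpt: "lin_indpt S"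
    unfolding maximal_def by auto
  moreover have "set (cols A) = col A ` {..<nc}"
    using A by (simp add: cols_def lessThan_atLeast0)
  ultimately have S_cols: "S \<subseteq> col A ` {..<nc}"
    by simp
  have card_S: "card S = n"
    using rank_card_indpt[OF A S] rank by simp
  obtain J where J: "J \<subseteq> {..<nc}" "inj_on (col A) J" "S = col A ` J"
    using S_cols by (auto simp: subset_image_inj)
  have card_J: "card J = n"
    using J card_S card_image by metis
  let ?B = "submatrix A {..<n} J"
  have sub: "{..<n} \<subseteq> {..<dim_row A}" "J \<subseteq> {..<dim_col A}"
    using A J by auto
  have B: "?B \<in> carrier_mat n n"
    using submatrix_carrier_subset[OF sub] card_J by simp
  have col_B: "col ?B k = col A (pick J k)" if k: "k < n" for k
  proof (rule eq_vecI)
    have "pick J k < nc"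
      using pick_in_set[of k J] k card_J J by auto
    then show "col ?B k $ r = col A (pick J k) $ r" if "r < dim_vec (col A (pick J k))" for r
      using that k A B index_submatrix_subset[OF sub] card_J by (simp add: pick_lessThan)
  qed (use A B in simp)
  have "set (cols ?B) = col A ` pick J ` {..<n}"
    using B col_B by (auto simp: cols_def image_image)
  also have "pick J ` {..<n} = J"
    using bij_betw_pick[of J] J card_J finite_subset by (fastforce simp: bij_betw_def)
  finally have set_B: "set (cols ?B) = S"
    using J by simp
  then have "distinct (cols ?B)"
    using card_S B card_distinct[of "cols ?B"] by simp
  then have "rank ?B = n"
    using lin_indpt_full_rank[OF B] indpt set_B by simp
  then show ?thesis
    using det_rank_iff[OF B] J card_J by blast
qed

lemma full_row_rank_iff_nonzero_minor:
  assumes A: "A \<in> carrier_mat m n"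
  shows "full_row_rank A \<longleftrightarrow> (\<exists>J \<subseteq> {..<n}. card J = m \<and> minor_cols A J \<noteq> 0)"
proof
  assume "full_row_rank A"
  then show "\<exists>J \<subseteq> {..<n}. card J = m \<and> minor_cols A J \<noteq> 0"
    using vec_space.nonzero_minor_if_full_rank[OF A] A
    by (simp add: full_row_rank_def minor_cols_def)
next
  assume "\<exists>J \<subseteq> {..<n}. card J = m \<and> minor_cols A J \<noteq> 0"
  then obtain J where J: "J \<subseteq> {..<n}" "card J = m" "det (submatrix A {..<m} J) \<noteq> 0"
    using A by (auto simp: minor_cols_def)
  have "{j. j < n \<and> j \<in> J} = J"
    using J by auto
  then have "m \<le> vec_space.rank m A"
    using vec_space.rank_gt_minor[OF A J(3)] J by simp
  then show "full_row_rank A"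
    using vec_space.rank_le_dim_row[OF A] A by (simp add: full_row_rank_def)
qed

lemma nonzero_minor_meets_row_support:
  assumes A: "A \<in> carrier_mat m n" and i: "i < m" and J: "J \<subseteq> {..<n}" "card J = m"
    and nonzero: "det (submatrix A {..<m} J) \<noteq> 0"
  obtains j where "j \<in> J" "A $$ (i, j) \<noteq> 0"
proof -
  have "(\<Sum>c\<in>J. (-1)^(i + card {x\<in>J. x < c}) * A $$ (i, c)
      * det (submatrix A ({..<m} - {i}) (J - {c}))) \<noteq> 0"
    using laplace_expansion_row_submatrix[OF A i J] nonzero by simp
  then obtain c where "c \<in> J" "(-1)^(i + card {x\<in>J. x < c}) * A $$ (i, c)
      * det (submatrix A ({..<m} - {i}) (J - {c})) \<noteq> 0"
    by (rule sum.not_neutral_contains_not_neutral)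
  then show thesis
    by (intro that[of c]) auto
qed

section \<open>Pivoting and trimming\<close>

lemma pivot_carrier: "A \<in> carrier_mat m n \<Longrightarrow> pivot A i j \<in> carrier_mat m n"
  unfolding pivot_def by simp

lemma index_pivot:
  "A \<in> carrier_mat m n \<Longrightarrow> k < m \<Longrightarrow> l < n \<Longrightarrow> pivot A i j $$ (k, l) =
    (if k = i then A $$ (i, l) / A $$ (i, j)
     else A $$ (k, l) - A $$ (k, j) * (A $$ (i, l) / A $$ (i, j)))"
  unfolding pivot_def by simp

lemma pivot_unit_col:
  assumes "A \<in> carrier_mat m n" "i < m" "j < n" "A $$ (i, j) \<noteq> 0"
  shows "pivot A i j $$ (i, j) = 1" "\<And>k. k < m \<Longrightarrow> k \<noteq> i \<Longrightarrow> pivot A i j $$ (k, j) = 0"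
  using index_pivot assms by auto

lemma det_submatrix_pivot:
  assumes A: "A \<in> carrier_mat m n" and i: "i < m" and a: "A $$ (i, j) \<noteq> 0"
    and J: "J \<subseteq> {..<n}" "card J = m"
  shows "det (submatrix (pivot A i j) {..<m} J) = det (submatrix A {..<m} J) / A $$ (i, j)"
proof -
  let ?B = "submatrix A {..<m} J"
  let ?E = "mat m m (\<lambda>(k, l). if k = i then ?B $$ (i, l) / A $$ (i, j)
    else ?B $$ (k, l) - A $$ (k, j) * (?B $$ (i, l) / A $$ (i, j)))"
  have sub: "{..<m} \<subseteq> {..<dim_row A}" "J \<subseteq> {..<dim_col A}"
    and sub_pivot: "{..<m} \<subseteq> {..<dim_row (pivot A i j)}" "J \<subseteq> {..<dim_col (pivot A i j)}"
    using A J pivot_carrier[OF A, of i j] by auto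
  have B: "?B \<in> carrier_mat m m"
    using submatrix_carrier_subset[OF sub] J by simp
  have pick_J: "pick J l < n" if "l < m" for l
    using pick_in_set[of l J] that J by auto
  have "submatrix (pivot A i j) {..<m} J = ?E"
  proof (rule eq_matI)
    fix k l
    assume "k < dim_row ?E" and "l < dim_col ?E"
    then have k: "k < m" and l: "l < m"
      by simp_all
    show "submatrix (pivot A i j) {..<m} J $$ (k, l) = ?E $$ (k, l)"
      using index_submatrix_subset[OF sub] index_submatrix_subset[OF sub_pivot] J k l i
      by (simp add: pick_lessThan index_pivot[OF A k pick_J[OF l]])
  qed (use submatrix_carrier_subset[OF sub_pivot] J in simp_all)
  then show ?thesis
    using det_row_operation[OF B i a] by simp
qed

lemma abs_det_submatrix_pivot:
  assumes A: "A \<in> carrier_mat m n" and i: "i < m" and a: "\<bar>A $$ (i, j)\<bar> = 1"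
    and J: "J \<subseteq> {..<n}" "card J = m"
  shows "\<bar>det (submatrix (pivot A i j) {..<m} J)\<bar> = \<bar>det (submatrix A {..<m} J)\<bar>"
  using det_submatrix_pivot[OF A i _ J] a by (simp add: abs_divide)

lemma abs_det_submatrix_eq_pivot_delete:
  assumes A: "A \<in> carrier_mat m n" and i: "i < m" and j: "j < n" and a: "\<bar>A $$ (i, j)\<bar> = 1"
    and J: "J \<subseteq> {..<n}" "card J = m" "j \<in> J"
  shows "\<bar>det (submatrix A {..<m} J)\<bar> = \<bar>det (submatrix (pivot A i j) ({..<m} - {i}) (J - {j}))\<bar>"
proof -
  have a0: "A $$ (i, j) \<noteq> 0"
    using a by auto
  have "det (submatrix A {..<m} J) / A $$ (i, j)
      = (-1)^(i + card {x\<in>J. x < j}) * det (submatrix (pivot A i j) ({..<m} - {i}) (J - {j}))"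
    using det_submatrix_pivot[OF A i a0 J(1,2)]
      det_submatrix_unit_col[OF pivot_carrier[OF A] i J pivot_unit_col[OF A i j a0]] by simp
  then have "\<bar>det (submatrix A {..<m} J) / A $$ (i, j)\<bar>
      = \<bar>det (submatrix (pivot A i j) ({..<m} - {i}) (J - {j}))\<bar>"
    by (simp add: abs_mult)
  then show ?thesis
    using a by (simp add: abs_divide)
qed

lemma trim_carrier:
  assumes A: "A \<in> carrier_mat m n" and i: "i < m" and j: "j < n"
  shows "trim A i j \<in> carrier_mat (m - 1) (n - 1)"
  using submatrix_carrier_subset[of "{..<m} - {i}" "pivot A i j" "{..<n} - {j}"]
    pivot_carrier[OF A, of i j] A i j by (simp add: trim_def)

lemma minor_trim:
  assumes A: "A \<in> carrier_mat m n" and i: "i < m" and j: "j < n" and K: "K \<subseteq> {..<n - 1}"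
  shows "minor_cols (trim A i j) K
    = det (submatrix (pivot A i j) ({..<m} - {i}) (pick ({..<n} - {j}) ` K))"
proof -
  let ?R = "{..<m} - {i}" and ?C = "{..<n} - {j}"
  have sub: "?R \<subseteq> {..<dim_row (pivot A i j)}" "?C \<subseteq> {..<dim_col (pivot A i j)}"
    using pivot_carrier[OF A, of i j] by auto
  have card: "card ?R = m - 1" "card ?C = n - 1"
    using i j by simp_all
  have "pick ?R ` {..<m - 1} = ?R"
    using bij_betw_pick[of ?R] card by (simp add: bij_betw_def)
  then have "submatrix (trim A i j) {..<m - 1} K = submatrix (pivot A i j) ?R (pick ?C ` K)"
    using submatrix_submatrix[OF sub, of "{..<m - 1}" K] A K card by (simp add: trim_def)
  then show ?thesis
    using trim_carrier[OF A i j] by (simp add: minor_cols_def)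
qed

lemma abs_minors_trim:
  assumes A: "A \<in> carrier_mat m n" and i: "i < m" and j: "j < n" and a: "\<bar>A $$ (i, j)\<bar> = 1"
  shows "(\<lambda>K. \<bar>minor_cols (trim A i j) K\<bar>) ` {K. K \<subseteq> {..<n - 1} \<and> card K = m - 1}
    = (\<lambda>J. \<bar>minor_cols A J\<bar>) ` {J. J \<subseteq> {..<n} \<and> card J = m \<and> j \<in> J}"
proof -
  let ?R = "{..<m} - {i}" and ?C = "{..<n} - {j}"
  let ?minor = "\<lambda>S. \<bar>det (submatrix (pivot A i j) ?R S)\<bar>"
  have "bij_betw (pick ?C) {..<n - 1} ?C"
    using bij_betw_pick[of ?C] j by simp
  then have "image (pick ?C) ` {K. K \<subseteq> {..<n - 1} \<and> card K = m - 1} = {S. S \<subseteq> ?C \<and> card S = m - 1}"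
    by (rule image_subsets_card_bij_betw)
  also have "\<dots> = (\<lambda>J. J - {j}) ` {J. J \<subseteq> {..<n} \<and> card J = m \<and> j \<in> J}"
    using remove_subsets_card_containing[of ?C j "m - 1"] i j by (simp add: insert_absorb)
  finally have subsets: "image (pick ?C) ` {K. K \<subseteq> {..<n - 1} \<and> card K = m - 1}
    = (\<lambda>J. J - {j}) ` {J. J \<subseteq> {..<n} \<and> card J = m \<and> j \<in> J}" .
  have "(\<lambda>K. \<bar>minor_cols (trim A i j) K\<bar>) ` {K. K \<subseteq> {..<n - 1} \<and> card K = m - 1}
      = ?minor ` image (pick ?C) ` {K. K \<subseteq> {..<n - 1} \<and> card K = m - 1}"
    using minor_trim[OF A i j] by (auto simp: image_image intro!: image_cong)
  also have "\<dots> = ?minor ` (\<lambda>J. J - {j}) ` {J. J \<subseteq> {..<n} \<and> card J = m \<and> j \<in> J}"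
    unfolding subsets ..
  also have "\<dots> = (\<lambda>J. \<bar>minor_cols A J\<bar>) ` {J. J \<subseteq> {..<n} \<and> card J = m \<and> j \<in> J}"
    using abs_det_submatrix_eq_pivot_delete[OF A i j a] A
    by (auto simp: image_image minor_cols_def intro!: image_cong)
  finally show ?thesis .
qed

section \<open>Equimodularity and trims\<close>

lemma nonzero_minor_through_col:
  assumes A: "A \<in> carrier_mat m n" and i: "i < m" and j: "j < n" and a: "\<bar>A $$ (i, j)\<bar> = 1"
    and rank: "full_row_rank A"
  obtains J where "J \<subseteq> {..<n}" "card J = m" "j \<in> J" "minor_cols A J \<noteq> 0"
proof -
  obtain J where J: "J \<subseteq> {..<n}" "card J = m" and nonzero: "minor_cols A J \<noteq> 0"
    using rank full_row_rank_iff_nonzero_minor[OF A] by blast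
  show thesis
  proof (cases "j \<in> J")
    case True
    then show thesis
      using that J nonzero by blast
  next
    case False
    let ?P = "pivot A i j"
    have a0: "A $$ (i, j) \<noteq> 0"
      using a by auto
    have "det (submatrix ?P {..<m} J) \<noteq> 0"
      using nonzero abs_det_submatrix_pivot[OF A i a J] A by (simp add: minor_cols_def)
    then have "(\<Sum>c\<in>J. (-1)^(card {x\<in>J. x < c} + card {x \<in> insert j (J - {c}). x < j})
        * ?P $$ (i, c) * det (submatrix ?P {..<m} (insert j (J - {c})))) \<noteq> 0"
      using exchange_expansion_unit_col[OF pivot_carrier[OF A] i j pivot_unit_col[OF A i j a0]
          J False]
      by simp
    then obtain c where c: "c \<in> J"
      and "(-1)^(card {x\<in>J. x < c} + card {x \<in> insert j (J - {c}). x < j})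
        * ?P $$ (i, c) * det (submatrix ?P {..<m} (insert j (J - {c}))) \<noteq> 0"
      by (rule sum.not_neutral_contains_not_neutral)
    then have "det (submatrix ?P {..<m} (insert j (J - {c}))) \<noteq> 0"
      by auto
    moreover note K = exchange_subset_card[OF J c j False]
    ultimately have "minor_cols A (insert j (J - {c})) \<noteq> 0"
      using abs_det_submatrix_pivot[OF A i a K] A by (simp add: minor_cols_def)
    then show thesis
      using that K by blast
  qed
qed

lemma equimodular_trim_if_equimodular:
  assumes A: "A \<in> carrier_mat m n" and i: "i < m" and j: "j < n" and a: "\<bar>A $$ (i, j)\<bar> = 1"
    and equi: "equimodular A"
  shows "equimodular (trim A i j)"
proof -
  let ?T = "trim A i j"
  have T: "?T \<in> carrier_mat (m - 1) (n - 1)"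
    by (rule trim_carrier[OF A i j])
  note minors = abs_minors_trim[OF A i j a]
  have lift: "\<exists>J. J \<subseteq> {..<n} \<and> card J = m \<and> j \<in> J \<and> \<bar>minor_cols A J\<bar> = \<bar>minor_cols ?T K\<bar>"
    if "K \<subseteq> {..<n - 1}" "card K = m - 1" for K
  proof -
    have "\<bar>minor_cols ?T K\<bar> \<in> (\<lambda>J. \<bar>minor_cols A J\<bar>) ` {J. J \<subseteq> {..<n} \<and> card J = m \<and> j \<in> J}"
      unfolding minors[symmetric] using that by blast
    then show ?thesis
      by (auto simp: image_iff)
  qed
  have "full_row_rank A"
    using equi by (simp add: equimodular_def)
  then obtain J where "J \<subseteq> {..<n}" "card J = m" "j \<in> J" "minor_cols A J \<noteq> 0"
    using nonzero_minor_through_col[OF A i j a] by blast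
  then have "\<bar>minor_cols A J\<bar> \<in> (\<lambda>K. \<bar>minor_cols ?T K\<bar>) ` {K. K \<subseteq> {..<n - 1} \<and> card K = m - 1}"
    unfolding minors by blast
  then obtain K where "K \<subseteq> {..<n - 1}" "card K = m - 1" "minor_cols ?T K \<noteq> 0"
    using \<open>minor_cols A J \<noteq> 0\<close> by auto
  then have "full_row_rank ?T"
    using full_row_rank_iff_nonzero_minor[OF T] by blast
  moreover have "\<bar>minor_cols ?T K\<bar> = \<bar>minor_cols ?T K'\<bar>"
    if K: "K \<subseteq> {..<n - 1}" "card K = m - 1" "minor_cols ?T K \<noteq> 0"
      and K': "K' \<subseteq> {..<n - 1}" "card K' = m - 1" "minor_cols ?T K' \<noteq> 0" for K K'
  proof -
    obtain J where J: "J \<subseteq> {..<n}" "card J = m" "\<bar>minor_cols A J\<bar> = \<bar>minor_cols ?T K\<bar>"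
      using lift[OF K(1,2)] by blast
    obtain J' where J': "J' \<subseteq> {..<n}" "card J' = m" "\<bar>minor_cols A J'\<bar> = \<bar>minor_cols ?T K'\<bar>"
      using lift[OF K'(1,2)] by blast
    have "minor_cols A J \<noteq> 0" "minor_cols A J' \<noteq> 0"
      using J(3) J'(3) K(3) K'(3) by auto
    then have "\<bar>minor_cols A J\<bar> = \<bar>minor_cols A J'\<bar>"
      using equi J(1,2) J'(1,2) unfolding equimodular_def carrier_matD[OF A] by blast
    then show ?thesis
      using J(3) J'(3) by simp
  qed
  ultimately show ?thesis
    using T by (auto simp: equimodular_def)
qed

lemma abs_minors_through_col_eq:
  assumes A: "A \<in> carrier_mat m n" and i: "i < m" and j: "j < n" and a: "\<bar>A $$ (i, j)\<bar> = 1"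
    and equi: "equimodular (trim A i j)"
    and J: "J \<subseteq> {..<n}" "card J = m" "j \<in> J" "minor_cols A J \<noteq> 0"
    and J': "J' \<subseteq> {..<n}" "card J' = m" "j \<in> J'" "minor_cols A J' \<noteq> 0"
  shows "\<bar>minor_cols A J\<bar> = \<bar>minor_cols A J'\<bar>"
proof -
  let ?T = "trim A i j"
  have T: "?T \<in> carrier_mat (m - 1) (n - 1)"
    by (rule trim_carrier[OF A i j])
  have lower: "\<exists>K. K \<subseteq> {..<n - 1} \<and> card K = m - 1 \<and> \<bar>minor_cols ?T K\<bar> = \<bar>minor_cols A J\<bar>"
    if "J \<subseteq> {..<n}" "card J = m" "j \<in> J" for J
  proof -
    have "\<bar>minor_cols A J\<bar> \<in> (\<lambda>K. \<bar>minor_cols ?T K\<bar>) ` {K. K \<subseteq> {..<n - 1} \<and> card K = m - 1}"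
      unfolding abs_minors_trim[OF A i j a] using that by blast
    then show ?thesis
      by (auto simp: image_iff)
  qed
  obtain K where K: "K \<subseteq> {..<n - 1}" "card K = m - 1" "\<bar>minor_cols ?T K\<bar> = \<bar>minor_cols A J\<bar>"
    using lower[OF J(1-3)] by blast
  obtain K' where K': "K' \<subseteq> {..<n - 1}" "card K' = m - 1" "\<bar>minor_cols ?T K'\<bar> = \<bar>minor_cols A J'\<bar>"
    using lower[OF J'(1-3)] by blast
  have "minor_cols ?T K \<noteq> 0" "minor_cols ?T K' \<noteq> 0"
    using J(4) J'(4) K(3) K'(3) by auto
  then have "\<bar>minor_cols ?T K\<bar> = \<bar>minor_cols ?T K'\<bar>"
    using equi K(1,2) K'(1,2) unfolding equimodular_def carrier_matD[OF T] by blast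
  then show ?thesis
    using K(3) K'(3) by simp
qed

lemma abs_minor_exchange_into_col:
  assumes A: "A \<in> carrier_mat m n" and i: "i < m" and j: "j < n" and a: "\<bar>A $$ (i, j)\<bar> = 1"
    and J: "J \<subseteq> {..<n}" "card J = m" "j \<notin> J" "minor_cols A J \<noteq> 0"
    and j': "j' \<in> J" "\<bar>A $$ (i, j')\<bar> = 1" "equimodular (trim A i j')"
  obtains K where "K \<subseteq> {..<n}" "card K = m" "j \<in> K" "\<bar>minor_cols A K\<bar> = \<bar>minor_cols A J\<bar>"
proof -
  let ?P = "pivot A i j"
  let ?t = "\<lambda>c. (-1)^(card {x\<in>J. x < c} + card {x \<in> insert j (J - {c}). x < j})
    * ?P $$ (i, c) * det (submatrix ?P {..<m} (insert j (J - {c})))"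
  have a0: "A $$ (i, j) \<noteq> 0"
    using a by auto
  have j'n: "j' < n"
    using J j' by auto
  have fin: "finite J"
    using J finite_subset by auto
  have abs_minor: "\<bar>minor_cols A K\<bar> = \<bar>det (submatrix ?P {..<m} K)\<bar>"
    if "K \<subseteq> {..<n}" "card K = m" for K
    using abs_det_submatrix_pivot[OF A i a that] A by (simp add: minor_cols_def)
  have expansion: "det (submatrix ?P {..<m} J) = (\<Sum>c\<in>J. ?t c)"
    by (rule exchange_expansion_unit_col[OF pivot_carrier[OF A] i j pivot_unit_col[OF A i j a0]
          J(1-3)])
  show thesis
  proof (cases "\<exists>c \<in> J - {j'}. ?t c \<noteq> 0")
    case True
    then obtain c where c: "c \<in> J" "c \<noteq> j'" "?t c \<noteq> 0"
      by blast
    note K = exchange_subset_card[OF J(1,2) c(1) j J(3)]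
    have "minor_cols A (insert j (J - {c})) \<noteq> 0"
      using c(3) abs_minor[OF K] by auto
    then have "\<bar>minor_cols A (insert j (J - {c}))\<bar> = \<bar>minor_cols A J\<bar>"
      using abs_minors_through_col_eq[OF A i j'n j'(2,3) K] c(2) j'(1) J by blast
    then show thesis
      using that K by blast
  next
    case False
    note K = exchange_subset_card[OF J(1,2) j'(1) j J(3)]
    have "det (submatrix ?P {..<m} J) = ?t j' + (\<Sum>c\<in>J - {j'}. ?t c)"
      unfolding expansion by (rule sum.remove[OF fin j'(1)])
    also have "(\<Sum>c\<in>J - {j'}. ?t c) = 0"
      by (rule sum.neutral) (use False in blast)
    finally have "\<bar>det (submatrix ?P {..<m} J)\<bar>
        = \<bar>?P $$ (i, j')\<bar> * \<bar>det (submatrix ?P {..<m} (insert j (J - {j'})))\<bar>"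
      by (simp add: abs_mult)
    moreover have "\<bar>?P $$ (i, j')\<bar> = 1"
      using index_pivot[OF A i j'n] a j'(2) by (simp add: abs_divide)
    ultimately have "\<bar>minor_cols A (insert j (J - {j'}))\<bar> = \<bar>minor_cols A J\<bar>"
      using abs_minor[OF K] abs_minor[OF J(1,2)] by simp
    then show thesis
      using that K by blast
  qed
qed

lemma equimodular_if_trims_equimodular:
  assumes A: "A \<in> carrier_mat m n" and i: "i < m" and rank: "full_row_rank A"
    and row: "\<forall>l<n. A $$ (i, l) \<in> {0, 1, -1}"
    and trims: "\<forall>j<n. A $$ (i, j) \<noteq> 0 \<longrightarrow> equimodular (trim A i j)"
  shows "equimodular A"
proof -
  have support: "\<bar>A $$ (i, j)\<bar> = 1" "equimodular (trim A i j)" if "j < n" "A $$ (i, j) \<noteq> 0" for j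
    using row trims that by auto
  have "\<bar>minor_cols A J\<bar> = \<bar>minor_cols A J'\<bar>"
    if J: "J \<subseteq> {..<n}" "card J = m" "minor_cols A J \<noteq> 0"
      and J': "J' \<subseteq> {..<n}" "card J' = m" "minor_cols A J' \<noteq> 0" for J J'
  proof -
    obtain j where j: "j \<in> J" "A $$ (i, j) \<noteq> 0"
      using nonzero_minor_meets_row_support[OF A i J(1,2)] J(3) A by (auto simp: minor_cols_def)
    obtain j' where j': "j' \<in> J'" "A $$ (i, j') \<noteq> 0"
      using nonzero_minor_meets_row_support[OF A i J'(1,2)] J'(3) A by (auto simp: minor_cols_def)
    have jn: "j < n" and j'n: "j' < n"
      using j j' J J' by auto
    note through_j = abs_minors_through_col_eq[OF A i jn support[OF jn j(2)]]
    show ?thesis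
    proof (cases "j \<in> J'")
      case True
      then show ?thesis
        using through_j J j(1) J' by blast
    next
      case False
      then obtain K where "K \<subseteq> {..<n}" "card K = m" "j \<in> K" "\<bar>minor_cols A K\<bar> = \<bar>minor_cols A J'\<bar>"
        using abs_minor_exchange_into_col[OF A i jn support(1)[OF jn j(2)] J'(1,2) _ J'(3) j'(1)
            support[OF j'n j'(2)]] by blast
      then show ?thesis
        using through_j[of J K] J j(1) J'(3) by auto
    qed
  qed
  then show ?thesis
    using rank A by (auto simp: equimodular_def)
qed

theorem mainTheorem3:
  fixes A :: "rat mat" and m n i :: nat
  assumes "A \<in> carrier_mat m n"
    and "m \<ge> 2"
    and "full_row_rank A"
    and "i < m"
    and "\<forall>l<n. A $$ (i,l) \<in> {0, 1, -1}"
  shows "equimodular A \<longleftrightarrow> (\<forall>j<n. A $$ (i,j) \<noteq> 0 \<longrightarrow> equimodular (trim A i j))"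
proof
  assume "equimodular A"
  then show "\<forall>j<n. A $$ (i,j) \<noteq> 0 \<longrightarrow> equimodular (trim A i j)"
    using equimodular_trim_if_equimodular[OF assms(1,4)] assms(5) by auto
next
  assume "\<forall>j<n. A $$ (i,j) \<noteq> 0 \<longrightarrow> equimodular (trim A i j)"
  then show "equimodular A"
    by (rule equimodular_if_trims_equimodular[OF assms(1,4,3,5)])
qed

end
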